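(* Let $0\leq\varepsilon\leq 1$ and let $G$ be a graph with $n$ vertices and $m$ edges such that $t(G)\leq \varepsilon (m/n)^3$. Then \[ \mu_n(G)\leq -(1-\varepsilon)\frac{4m^2}{n^3}. \]
   Context: All graphs are finite, simple and undirected. $t(G)$ is the number of triangles in $G$. $\mu_n(G)$ denotes the smallest eigenvalue of the adjacency matrix of $G$. *)

theory Defs
  imports Complex_Main
begin

definition simple_graph :: "('a \<Rightarrow> 'a \<Rightarrow> bool) \<Rightarrow> bool" where
  "simple_graph E \<longleftrightarrow> (\<forall>u v. E u v \<longrightarrow> E v u) \<and> (\<forall>v. \<not> E v v)"

definition edges :: "('a \<Rightarrow> 'a \<Rightarrow> bool) \<Rightarrow> 'a set set" where
  "edges E = {{u, v} | u v. E u v}"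

definition num_edges :: "('a \<Rightarrow> 'a \<Rightarrow> bool) \<Rightarrow> nat" where
  "num_edges E = card (edges E)"

definition num_triangles :: "('a \<Rightarrow> 'a \<Rightarrow> bool) \<Rightarrow> nat" where
  "num_triangles E = card {T. card T = 3 \<and> (\<forall>u\<in>T. \<forall>v\<in>T. u \<noteq> v \<longrightarrow> E u v)}"

definition adj_matrix :: "('a \<Rightarrow> 'a \<Rightarrow> bool) \<Rightarrow> 'a \<Rightarrow> 'a \<Rightarrow> real" where
  "adj_matrix E u v = (if E u v then 1 else 0)"

definition adj_eigenvalues :: "('a::finite \<Rightarrow> 'a \<Rightarrow> bool) \<Rightarrow> real set" where
  "adj_eigenvalues E = {\<mu>. \<exists>x :: 'a \<Rightarrow> real. x \<noteq> (\<lambda>_. 0) \<and>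
      (\<forall>u. (\<Sum>v\<in>UNIV. adj_matrix E u v * x v) = \<mu> * x u)}"

definition min_eigenvalue :: "('a::finite \<Rightarrow> 'a \<Rightarrow> bool) \<Rightarrow> real" where
  "min_eigenvalue E = Min (adj_eigenvalues E)"

end

theory Submission
  imports Defs "HOL-Analysis.Analysis"
begin

text \<open>Let \<mu> and \<nu> be the smallest and the largest eigenvalue of the adjacency matrix A and y a
unit eigenvector for \<nu>. Both are extreme values of the Rayleigh quotient, so A - \<mu> I is positive
semidefinite, \<mu> \<le> 0 (test vector a basis vector) and \<nu> \<ge> d = 2m/n (test vector all ones).
The row a_u of A has component \<nu> y_u along y, hence a_u (A - \<mu> I) a_u \<ge> \<nu>^2 y_u^2 (\<nu> - \<mu>), and
summing over u gives \<nu>^2 (\<nu> - \<mu>) \<le> tr A^3 - \<mu> tr A^2 = 6t - 2m\<mu>. Since the left-hand side is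
at least d^3 and 6t \<le> \<epsilon> d^3, we get (1 - \<epsilon>) d^3 \<le> -2m\<mu> = -dn\<mu>, which is the claim.\<close>

definition eigenvalues :: "real^'n^'n \<Rightarrow> real set" where
  "eigenvalues M = {\<mu>. \<exists>x. x \<noteq> 0 \<and> M *v x = \<mu> *\<^sub>R x}"

lemma transpose_diff: "transpose (A - B) = transpose A - transpose (B :: 'a::ring_1^'n^'m)"
  by (simp add: transpose_def vec_eq_iff)

lemma transpose_eq_self_iff: "transpose M = M \<longleftrightarrow> (\<forall>i j. M $ i $ j = M $ j $ i)"
  by (auto simp: transpose_def vec_eq_iff)

lemma inner_matrix_vector_symmetric:
  fixes M :: "real^'n^'n"
  assumes "transpose M = M"
  shows "x \<bullet> (M *v y) = (M *v x) \<bullet> y"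
  using dot_lmul_matrix[of x M y] transpose_matrix_vector[of M x] assms by simp

lemma quadratic_form_add:
  fixes M :: "real^'n^'n"
  assumes "transpose M = M"
  shows "(x + c *\<^sub>R z) \<bullet> (M *v (x + c *\<^sub>R z))
           = x \<bullet> (M *v x) + 2 * c * (z \<bullet> (M *v x)) + c\<^sup>2 * (z \<bullet> (M *v z))"
proof -
  have "x \<bullet> (M *v z) = z \<bullet> (M *v x)"
    using inner_matrix_vector_symmetric[OF assms, of x z] by (simp only: inner_commute)
  moreover have "M *v (x + c *\<^sub>R z) = M *v x + c *\<^sub>R (M *v z)"
    by (simp only: matrix_vector_right_distrib matrix_vector_mult_scaleR)
  ultimately show ?thesis
    by (simp add: inner_add_left inner_add_right power2_eq_square distrib_left)
qed

lemma quadratic_form_scaleR: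
  fixes M :: "real^'n^'n"
  shows "(c *\<^sub>R z) \<bullet> (M *v (c *\<^sub>R z)) = c\<^sup>2 * (z \<bullet> (M *v z))"
  by (simp add: matrix_vector_mult_scaleR power2_eq_square)

lemma shifted_matrix_vector: "(M - c *\<^sub>R mat 1) *v z = M *v z - c *\<^sub>R (z :: real^'n)"
  by (simp add: matrix_vector_mult_diff_rdistrib flip: scaleR_matrix_vector_assoc)

lemma transpose_shifted:
  "transpose M = M \<Longrightarrow> transpose (M - c *\<^sub>R mat 1) = M - c *\<^sub>R (mat 1 :: real^'n^'n)"
  by (simp add: transpose_diff transpose_scalar)

lemma psd_quadratic_form_eq_0_imp_kernel:
  fixes B :: "real^'n^'n"
  assumes sym: "transpose B = B" and psd: "\<And>z. 0 \<le> z \<bullet> (B *v z)"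
    and x: "x \<bullet> (B *v x) = 0"
  shows "B *v x = 0"
proof (rule ccontr)
  assume "B *v x \<noteq> 0"
  define a where "a = (B *v x) \<bullet> (B *v x)"
  define c where "c = (B *v x) \<bullet> (B *v (B *v x))"
  \<comment> \<open>a step of length t along -B x lowers the form by 2ta - t^2c, which is positive\<close>
  define t where "t = a / (c + 1)"
  have "a > 0" using \<open>B *v x \<noteq> 0\<close> by (simp add: a_def)
  moreover have "c \<ge> 0" using psd by (simp add: c_def)
  ultimately have "t > 0" and "t * c = a - t" by (simp_all add: t_def field_simps)
  then have "t * (t * c - 2 * a) < 0" using \<open>a > 0\<close> by (simp add: mult_pos_neg)
  moreover have "t * (t * c - 2 * a) = (x + (- t) *\<^sub>R (B *v x)) \<bullet> (B *v (x + (- t) *\<^sub>R (B *v x)))"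
    unfolding quadratic_form_add[OF sym] x a_def[symmetric] c_def[symmetric]
    by (simp add: power2_eq_square algebra_simps)
  ultimately show False using psd[of "x + (- t) *\<^sub>R (B *v x)"] by linarith
qed

lemma psd_quadratic_form_ge_eigencomponent:
  fixes B :: "real^'n^'n"
  assumes sym: "transpose B = B" and psd: "\<And>z. 0 \<le> z \<bullet> (B *v z)"
    and y: "norm y = 1" "B *v y = \<theta> *\<^sub>R y"
  shows "(x \<bullet> y)\<^sup>2 * \<theta> \<le> x \<bullet> (B *v x)"
proof -
  define c where "c = x \<bullet> y"
  define w where "w = x - c *\<^sub>R y"
  have "y \<bullet> y = 1" using y(1) by (simp add: norm_eq_1)
  then have "y \<bullet> w = 0" by (simp add: w_def c_def inner_diff_right inner_commute)
  then have "y \<bullet> (B *v w) = 0"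
    using inner_matrix_vector_symmetric[OF sym, of y w] y(2) by simp
  have "x = w + c *\<^sub>R y" by (simp add: w_def)
  then have "x \<bullet> (B *v x) = w \<bullet> (B *v w) + c\<^sup>2 * \<theta>"
    using quadratic_form_add[OF sym, of w c y] \<open>y \<bullet> (B *v w) = 0\<close> \<open>y \<bullet> y = 1\<close> y(2) by simp
  then show ?thesis using psd[of w] by (simp add: c_def)
qed

lemma rayleigh_minimum:
  fixes M :: "real^'n^'n"
  assumes sym: "transpose M = M"
  obtains x \<mu> where "norm x = 1" and "M *v x = \<mu> *\<^sub>R x"
    and "\<And>z. \<mu> * (z \<bullet> z) \<le> z \<bullet> (M *v z)"
proof -
  let ?q = "\<lambda>z. z \<bullet> (M *v z)"
  have "continuous_on (sphere 0 1) ?q" by (intro continuous_intros)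
  then obtain x where x: "x \<in> sphere 0 1" and min: "\<And>w. w \<in> sphere 0 1 \<Longrightarrow> ?q x \<le> ?q w"
    using continuous_attains_inf[OF compact_sphere, of 0 1 ?q] by auto
  define \<mu> where "\<mu> = ?q x"
  have bound: "\<mu> * (z \<bullet> z) \<le> ?q z" for z
  proof (cases "z = 0")
    case False
    then have "z \<bullet> z > 0" by simp
    have "\<mu> \<le> ?q ((1 / norm z) *\<^sub>R z)" unfolding \<mu>_def using False by (intro min) simp
    also have "\<dots> = ?q z / (z \<bullet> z)"
      unfolding quadratic_form_scaleR by (simp add: power_divide power2_norm_eq_inner)
    finally show ?thesis using \<open>z \<bullet> z > 0\<close> by (simp add: pos_le_divide_eq)
  qed simp
  define B where "B = M - \<mu> *\<^sub>R mat 1"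
  have "B *v x = 0"
  proof (rule psd_quadratic_form_eq_0_imp_kernel)
    show "transpose B = B" unfolding B_def by (rule transpose_shifted[OF sym])
    show "0 \<le> z \<bullet> (B *v z)" for z
      using bound[of z] by (simp add: B_def shifted_matrix_vector inner_diff_right)
    show "x \<bullet> (B *v x) = 0"
      using x by (simp add: B_def shifted_matrix_vector inner_diff_right \<mu>_def norm_eq_1)
  qed
  then have "M *v x = \<mu> *\<^sub>R x" by (simp add: B_def shifted_matrix_vector)
  with x bound show ?thesis by (intro that) auto
qed

lemma rayleigh_maximum:
  fixes M :: "real^'n^'n"
  assumes sym: "transpose M = M"
  obtains y \<nu> where "norm y = 1" and "M *v y = \<nu> *\<^sub>R y"
    and "\<And>z. z \<bullet> (M *v z) \<le> \<nu> * (z \<bullet> z)"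
proof -
  have neg: "(- M) *v z = - (M *v z)" for z
    by (simp add: matrix_vector_mult_def vec_eq_iff sum_negf)
  have "transpose (- M) = - M" using sym by (simp add: transpose_eq_self_iff)
  then obtain y \<mu> where y: "norm y = 1" "(- M) *v y = \<mu> *\<^sub>R y"
      and bound: "\<And>z. \<mu> * (z \<bullet> z) \<le> z \<bullet> ((- M) *v z)"
    using rayleigh_minimum by blast
  show ?thesis
  proof (rule that[of y "- \<mu>"])
    show "norm y = 1" by (rule y(1))
    show "M *v y = (- \<mu>) *\<^sub>R y" by (metis neg minus_minus scaleR_minus_left y(2))
    show "z \<bullet> (M *v z) \<le> - \<mu> * (z \<bullet> z)" for z using bound[of z] by (simp add: neg)
  qed
qed

lemma finite_eigenvalues:
  fixes M :: "real^'n^'n"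
  assumes sym: "transpose M = M"
  shows "finite (eigenvalues M)"
proof -
  define v where "v = (\<lambda>\<mu>. SOME x. x \<noteq> 0 \<and> M *v x = \<mu> *\<^sub>R x)"
  have v: "v \<mu> \<noteq> 0 \<and> M *v v \<mu> = \<mu> *\<^sub>R v \<mu>" if "\<mu> \<in> eigenvalues M" for \<mu>
  proof -
    have "\<exists>x. x \<noteq> 0 \<and> M *v x = \<mu> *\<^sub>R x" using that by (simp add: eigenvalues_def)
    then show ?thesis unfolding v_def by (rule someI_ex)
  qed
  have orth: "v \<alpha> \<bullet> v \<beta> = 0"
    if "\<alpha> \<in> eigenvalues M" "\<beta> \<in> eigenvalues M" "\<alpha> \<noteq> \<beta>" for \<alpha> \<beta>
  proof -
    have "\<beta> * (v \<alpha> \<bullet> v \<beta>) = \<alpha> * (v \<alpha> \<bullet> v \<beta>)"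
      using inner_matrix_vector_symmetric[OF sym, of "v \<alpha>" "v \<beta>"] v[OF that(1)] v[OF that(2)]
      by simp
    then show ?thesis using that(3) by simp
  qed
  have "inj_on v (eigenvalues M)"
    by (rule inj_onI) (metis v scaleR_cancel_right)
  moreover have "independent (v ` eigenvalues M)"
    by (rule pairwise_orthogonal_independent)
      (use v orth in \<open>auto simp: pairwise_def orthogonal_def\<close>)
  then have "finite (v ` eigenvalues M)" using independent_bound by blast
  ultimately show ?thesis using finite_imageD by blast
qed

lemma Min_eigenvalues_eq:
  fixes M :: "real^'n^'n"
  assumes sym: "transpose M = M" and x: "x \<noteq> 0" "M *v x = \<mu> *\<^sub>R x"
    and bound: "\<And>z. \<mu> * (z \<bullet> z) \<le> z \<bullet> (M *v z)"
  shows "Min (eigenvalues M) = \<mu>"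
proof (rule Min_eqI)
  show "finite (eigenvalues M)" by (rule finite_eigenvalues[OF sym])
  show "\<mu> \<in> eigenvalues M" using x unfolding eigenvalues_def by blast
  fix \<alpha> assume "\<alpha> \<in> eigenvalues M"
  then obtain z where "z \<noteq> 0" "M *v z = \<alpha> *\<^sub>R z" unfolding eigenvalues_def by blast
  then have "\<mu> * (z \<bullet> z) \<le> \<alpha> * (z \<bullet> z)" using bound[of z] by simp
  then show "\<mu> \<le> \<alpha>" using \<open>z \<noteq> 0\<close> by simp
qed

lemma rayleigh_bound_le_diagonal:
  fixes M :: "real^'n^'n"
  assumes "\<And>z. \<mu> * (z \<bullet> z) \<le> z \<bullet> (M *v z)"
  shows "\<mu> \<le> M $ i $ i"
  using assms[of "axis i 1"]
  by (simp add: inner_axis' inner_axis_axis matrix_vector_mult_basis column_def)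

lemma sum_entries_le_rayleigh_bound:
  fixes M :: "real^'n^'n"
  assumes "\<And>z. z \<bullet> (M *v z) \<le> \<nu> * (z \<bullet> z)"
  shows "(\<Sum>i\<in>UNIV. \<Sum>j\<in>UNIV. M $ i $ j) \<le> \<nu> * CARD('n)"
  using assms[of 1] by (simp add: inner_vec_def matrix_vector_mult_def)

lemma trace_cube_lower_bound:
  fixes M :: "real^'n^'n"
  assumes sym: "transpose M = M"
    and bound: "\<And>z. \<mu> * (z \<bullet> z) \<le> z \<bullet> (M *v z)"
    and y: "norm y = 1" "M *v y = \<nu> *\<^sub>R y"
  shows "\<nu>\<^sup>2 * (\<nu> - \<mu>) \<le> trace (M ** M ** M) - \<mu> * trace (M ** M)"
proof -
  define B where "B = M - \<mu> *\<^sub>R mat 1"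
  have symB: "transpose B = B" unfolding B_def by (rule transpose_shifted[OF sym])
  have psdB: "0 \<le> z \<bullet> (B *v z)" for z
    using bound[of z] by (simp add: B_def shifted_matrix_vector inner_diff_right)
  have By: "B *v y = (\<nu> - \<mu>) *\<^sub>R y"
    using y(2) by (simp add: B_def shifted_matrix_vector scaleR_diff_left)
  have row: "M $ i \<bullet> y = \<nu> * y $ i" for i
    using arg_cong[OF y(2), of "\<lambda>v. v $ i"] by (simp add: matrix_vector_mult_def inner_vec_def)
  have Msym: "M $ i $ j = M $ j $ i" for i j using sym by (simp add: transpose_eq_self_iff)
  have "(\<Sum>i\<in>UNIV. (y $ i)\<^sup>2) = 1"
    using y(1) by (simp add: norm_eq_1 inner_vec_def power2_eq_square)
  then have "\<nu>\<^sup>2 * (\<nu> - \<mu>) = (\<Sum>i\<in>UNIV. (M $ i \<bullet> y)\<^sup>2 * (\<nu> - \<mu>))"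
    by (simp add: row power_mult_distrib flip: sum_distrib_left sum_distrib_right)
  also have "\<dots> \<le> (\<Sum>i\<in>UNIV. M $ i \<bullet> (B *v M $ i))"
    by (intro sum_mono psd_quadratic_form_ge_eigencomponent[OF symB psdB y(1) By])
  also have "\<dots> = (\<Sum>i\<in>UNIV. M $ i \<bullet> (M *v M $ i)) - \<mu> * (\<Sum>i\<in>UNIV. M $ i \<bullet> M $ i)"
    by (simp add: B_def shifted_matrix_vector inner_diff_right sum_subtractf sum_distrib_left)
  also have "\<dots> = trace (M ** M ** M) - \<mu> * trace (M ** M)"
    by (simp add: trace_def matrix_matrix_mult_def matrix_vector_mult_def inner_vec_def
        sum_distrib_left sum_distrib_right Msym mult_ac)
  finally show ?thesis .
qed

lemma card_eq_mult_card_image: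
  assumes "finite S" and "\<And>y. y \<in> f ` S \<Longrightarrow> card {x \<in> S. f x = y} = k"
  shows "card S = k * card (f ` S)"
proof -
  have "card S = (\<Sum>y\<in>f ` S. card {x \<in> S. f x = y})"
    using sum.image_gen[OF assms(1), of "\<lambda>_. 1" f] by (simp only: card_eq_sum)
  also have "\<dots> = k * card (f ` S)" using assms(2) by simp
  finally show ?thesis .
qed

lemma sum_UNIV_pairs:
  "(\<Sum>u\<in>UNIV. \<Sum>v\<in>UNIV. f u v) = (\<Sum>p\<in>UNIV. f (fst p) (snd p))"
  by (simp only: sum.cartesian_product UNIV_Times_UNIV case_prod_unfold)

lemma card_adjacent_pairs:
  fixes E :: "'a::finite \<Rightarrow> 'a \<Rightarrow> bool"
  assumes "simple_graph E"
  shows "card {(u, v). E u v} = 2 * num_edges E"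
proof -
  have sym: "E u v \<Longrightarrow> E v u" and irrefl: "\<not> E u u" for u v
    using assms by (auto simp: simple_graph_def)
  let ?P = "{(u, v). E u v}"
  let ?f = "\<lambda>(u, v). {u, v}"
  have image: "?f ` ?P = edges E" by (auto simp: edges_def)
  have "card {p \<in> ?P. ?f p = e} = 2" if "e \<in> ?f ` ?P" for e
  proof -
    from that obtain a b where ab: "E a b" "e = {a, b}" by auto
    then have "a \<noteq> b" using irrefl by auto
    have "{p \<in> ?P. ?f p = e} = {(a, b), (b, a)}"
      using ab sym by (auto simp: doubleton_eq_iff)
    then show ?thesis using \<open>a \<noteq> b\<close> by simp
  qed
  then have "card ?P = 2 * card (?f ` ?P)" by (intro card_eq_mult_card_image) simp_all
  then show ?thesis by (simp add: image num_edges_def)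
qed

lemma card_closed_3_walks:
  fixes E :: "'a::finite \<Rightarrow> 'a \<Rightarrow> bool"
  assumes "simple_graph E"
  shows "card {(u, v, w). E u v \<and> E v w \<and> E w u} = 6 * num_triangles E"
proof -
  have sym: "E u v \<Longrightarrow> E v u" and irrefl: "\<not> E u u" for u v
    using assms by (auto simp: simple_graph_def)
  let ?W = "{(u, v, w). E u v \<and> E v w \<and> E w u}"
  let ?f = "\<lambda>(u, v, w). {u, v, w}"
  let ?T = "{T. card T = 3 \<and> (\<forall>u\<in>T. \<forall>v\<in>T. u \<noteq> v \<longrightarrow> E u v)}"
  have distinct: "u \<noteq> v" "v \<noteq> w" "w \<noteq> u" if "(u, v, w) \<in> ?W" for u v w
    using that irrefl by auto
  have image: "?f ` ?W = ?T"
  proof (intro equalityI subsetI)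
    fix T assume "T \<in> ?f ` ?W"
    then obtain u v w where T: "T = {u, v, w}" and W: "(u, v, w) \<in> ?W" by auto
    have "card T = 3" using T distinct[OF W] by auto
    moreover have "\<forall>x\<in>T. \<forall>y\<in>T. x \<noteq> y \<longrightarrow> E x y" using T W sym by auto
    ultimately show "T \<in> ?T" by simp
  next
    fix T assume "T \<in> ?T"
    then obtain a b c where T: "T = {a, b, c}" "a \<noteq> b" "b \<noteq> c" "a \<noteq> c"
      by (auto simp: card_3_iff)
    with \<open>T \<in> ?T\<close> have "(a, b, c) \<in> ?W" by auto
    then show "T \<in> ?f ` ?W" using T(1) by force
  qed
  have "card {p \<in> ?W. ?f p = T} = 6" if "T \<in> ?f ` ?W" for T
  proof -
    from that obtain a b c where T: "T = {a, b, c}" and W: "(a, b, c) \<in> ?W" by auto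
    let ?perms = "{(a, b, c), (a, c, b), (b, a, c), (b, c, a), (c, a, b), (c, b, a)}"
    have "{p \<in> ?W. ?f p = T} = ?perms"
    proof (intro equalityI subsetI)
      fix p assume "p \<in> {p \<in> ?W. ?f p = T}"
      then obtain u v w where p: "p = (u, v, w)" "(u, v, w) \<in> ?W" "{u, v, w} = {a, b, c}"
        using T by auto
      then have "u \<in> {a, b, c}" "v \<in> {a, b, c}" "w \<in> {a, b, c}" by blast+
      with distinct[OF p(2)] show "p \<in> ?perms" using p(1) by auto
    next
      fix p assume "p \<in> ?perms"
      then show "p \<in> {p \<in> ?W. ?f p = T}" using W sym T by auto
    qed
    then show ?thesis using distinct[OF W] by simp
  qed
  then have "card ?W = 6 * card (?f ` ?W)" by (intro card_eq_mult_card_image) simp_all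
  then show ?thesis by (simp add: image num_triangles_def)
qed

definition adjacency :: "('a::finite \<Rightarrow> 'a \<Rightarrow> bool) \<Rightarrow> real^'a^'a" where
  "adjacency E = (\<chi> u v. adj_matrix E u v)"

lemma adjacency_nth: "adjacency E $ u $ v = of_bool (E u v)"
  by (simp add: adjacency_def adj_matrix_def)

lemma transpose_adjacency: "simple_graph E \<Longrightarrow> transpose (adjacency E) = adjacency E"
  by (auto simp: transpose_eq_self_iff adjacency_nth simple_graph_def)

lemma adj_eigenvalues_eq_eigenvalues: "adj_eigenvalues E = eigenvalues (adjacency E)"
proof -
  have "(\<forall>u. (\<Sum>v\<in>UNIV. adj_matrix E u v * x $ v) = \<mu> * x $ u) \<longleftrightarrow>
      adjacency E *v x = \<mu> *\<^sub>R x" for x \<mu>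
    by (simp add: adjacency_def matrix_vector_mult_def vec_eq_iff)
  moreover have "(\<exists>x :: 'a \<Rightarrow> real. P x) \<longleftrightarrow> (\<exists>x. P (vec_nth x))" for P
    by (metis vec_lambda_inverse UNIV_I)
  ultimately show ?thesis
    unfolding adj_eigenvalues_def eigenvalues_def by (simp add: vec_eq_iff fun_eq_iff)
qed

lemma sum_adjacency:
  assumes "simple_graph E"
  shows "(\<Sum>u\<in>UNIV. \<Sum>v\<in>UNIV. adjacency E $ u $ v) = 2 * real (num_edges E)"
proof -
  have "(\<Sum>u\<in>UNIV. \<Sum>v\<in>UNIV. adjacency E $ u $ v) = (\<Sum>p\<in>UNIV. of_bool (E (fst p) (snd p)))"
    unfolding adjacency_nth by (rule sum_UNIV_pairs)
  also have "\<dots> = 2 * real (num_edges E)"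
    using card_adjacent_pairs[OF assms] by (simp add: case_prod_unfold)
  finally show ?thesis .
qed

lemma trace_adjacency_square:
  assumes "simple_graph E"
  shows "trace (adjacency E ** adjacency E) = 2 * real (num_edges E)"
proof -
  have "adjacency E $ u $ v * adjacency E $ v $ u = adjacency E $ u $ v" for u v
    using assms by (cases "E u v") (auto simp: adjacency_nth simple_graph_def)
  then show ?thesis
    using sum_adjacency[OF assms] by (simp only: trace_def matrix_matrix_mult_def vec_lambda_beta)
qed

lemma trace_adjacency_cube:
  assumes "simple_graph E"
  shows "trace (adjacency E ** adjacency E ** adjacency E) = 6 * real (num_triangles E)"
proof -
  have "trace (adjacency E ** adjacency E ** adjacency E)
      = (\<Sum>u\<in>UNIV. \<Sum>w\<in>UNIV. \<Sum>v\<in>UNIV. of_bool (E u v \<and> E v w \<and> E w u))"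
    by (simp add: trace_def matrix_matrix_mult_def adjacency_nth sum_distrib_right of_bool_conj
        mult.assoc)
  also have "\<dots> = (\<Sum>u\<in>UNIV. \<Sum>v\<in>UNIV. \<Sum>w\<in>UNIV. of_bool (E u v \<and> E v w \<and> E w u))"
    by (intro sum.cong refl sum.swap)
  also have "\<dots> = (\<Sum>p\<in>UNIV. of_bool (E (fst p) (fst (snd p)) \<and> E (fst (snd p)) (snd (snd p))
      \<and> E (snd (snd p)) (fst p)))"
    by (simp only: sum_UNIV_pairs)
  also have "\<dots> = 6 * real (num_triangles E)"
    using card_closed_3_walks[OF assms] by (simp add: case_prod_unfold)
  finally show ?thesis .
qed

lemma eigenvalue_bound_arith:
  fixes m n t \<epsilon> \<mu> \<nu> :: real
  assumes "n > 0" "m \<ge> 0" "\<epsilon> \<ge> 0" "\<mu> \<le> 0" "2 * m \<le> \<nu> * n"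
    and t: "t \<le> \<epsilon> * (m / n) ^ 3"
    and trace: "\<nu>\<^sup>2 * (\<nu> - \<mu>) \<le> 6 * t - \<mu> * (2 * m)"
  shows "\<mu> \<le> - (1 - \<epsilon>) * (4 * m ^ 2 / n ^ 3)"
proof -
  define d where "d = 2 * m / n"
  have "d \<ge> 0" "d \<le> \<nu>" using assms(1,2,5) by (simp_all add: d_def pos_divide_le_eq)
  have "m = d * n / 2" using assms(1) by (simp add: d_def)
  have "6 * t \<le> \<epsilon> * d ^ 3"
  proof -
    have "t \<le> \<epsilon> * d ^ 3 / 8" using t assms(1) by (simp add: d_def power_divide)
    moreover have "0 \<le> \<epsilon> * d ^ 3" using assms(3) \<open>d \<ge> 0\<close> by simp
    ultimately show ?thesis by linarith
  qed
  have "d ^ 3 \<le> \<nu> ^ 3" using \<open>d \<le> \<nu>\<close> \<open>d \<ge> 0\<close> by (rule power_mono)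
  also have "\<dots> \<le> \<nu>\<^sup>2 * (\<nu> - \<mu>)"
    using mult_nonneg_nonneg[OF zero_le_power2[of \<nu>], of "- \<mu>"] assms(4)
    by (simp add: power3_eq_cube power2_eq_square algebra_simps)
  also have "\<dots> \<le> 6 * t - \<mu> * (2 * m)" by (rule trace)
  also have "\<dots> \<le> \<epsilon> * d ^ 3 - \<mu> * (2 * m)" using \<open>6 * t \<le> \<epsilon> * d ^ 3\<close> by simp
  finally have "(1 - \<epsilon>) * d ^ 3 \<le> d * (n * - \<mu>)"
    by (simp add: \<open>m = d * n / 2\<close> algebra_simps)
  show ?thesis
  proof (cases "d = 0")
    case True
    then show ?thesis using \<open>m = d * n / 2\<close> assms(4) by simp
  next
    case False
    with \<open>d \<ge> 0\<close> have "d > 0" by simp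
    have "d * ((1 - \<epsilon>) * d\<^sup>2) \<le> d * (n * - \<mu>)"
      using \<open>(1 - \<epsilon>) * d ^ 3 \<le> d * (n * - \<mu>)\<close> by (simp add: power2_eq_square power3_eq_cube mult_ac)
    then have "(1 - \<epsilon>) * d\<^sup>2 \<le> n * - \<mu>" using \<open>d > 0\<close> by (rule mult_left_le_imp_le)
    then show ?thesis
      using assms(1) by (simp add: d_def field_simps power2_eq_square power3_eq_cube)
  qed
qed

theorem corollary4:
  fixes E :: "'a::finite \<Rightarrow> 'a \<Rightarrow> bool" and \<epsilon> :: real
  assumes "simple_graph E"
    and "0 \<le> \<epsilon>" and "\<epsilon> \<le> 1"
    and "real (num_triangles E) \<le> \<epsilon> * (real (num_edges E) / real (card (UNIV :: 'a set))) ^ 3"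
  shows "min_eigenvalue E \<le> - (1 - \<epsilon>) * (4 * real (num_edges E) ^ 2 / real (card (UNIV :: 'a set)) ^ 3)"
proof -
  let ?A = "adjacency E"
  have sym: "transpose ?A = ?A" by (rule transpose_adjacency[OF assms(1)])
  obtain x \<mu> where x: "norm x = 1" "?A *v x = \<mu> *\<^sub>R x"
    and \<mu>: "\<And>z. \<mu> * (z \<bullet> z) \<le> z \<bullet> (?A *v z)"
    using rayleigh_minimum[OF sym] by blast
  obtain y \<nu> where y: "norm y = 1" "?A *v y = \<nu> *\<^sub>R y"
    and \<nu>: "\<And>z. z \<bullet> (?A *v z) \<le> \<nu> * (z \<bullet> z)"
    using rayleigh_maximum[OF sym] by blast
  have "x \<noteq> 0" using x(1) by auto
  then have "min_eigenvalue E = \<mu>"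
    unfolding min_eigenvalue_def adj_eigenvalues_eq_eigenvalues
    using Min_eigenvalues_eq[OF sym _ x(2) \<mu>] by blast
  moreover have "\<mu> \<le> 0"
    using rayleigh_bound_le_diagonal[OF \<mu>] assms(1) by (auto simp: adjacency_nth simple_graph_def)
  moreover have "2 * real (num_edges E) \<le> \<nu> * card (UNIV :: 'a set)"
    using sum_entries_le_rayleigh_bound[OF \<nu>] sum_adjacency[OF assms(1)] by simp
  moreover have "\<nu>\<^sup>2 * (\<nu> - \<mu>) \<le> 6 * real (num_triangles E) - \<mu> * (2 * real (num_edges E))"
    using trace_cube_lower_bound[OF sym \<mu> y]
    by (simp add: trace_adjacency_square[OF assms(1)] trace_adjacency_cube[OF assms(1)])
  ultimately show ?thesis
    using eigenvalue_bound_arith[OF _ _ assms(2) _ _ assms(4)] by simp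
qed

end
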